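(* Let $p>2$ be a prime, $N\ge2$ an integer with $p\nmid N+1$, and $m\in\{1,2\}$. Then in $\mathbb{Z}_{(p)}[X]$ \[ \mathbb{HD}^{mp-1}_{N+1}(X)\equiv(-(N+1))^{mp-1}\sum_{i=0}^{\left[\frac{mp-1}{N+1}\right]}\frac{\big(1-mpH_{i(N+1)}\big)\prod_{j=1}^N\{\tfrac{j}{N+1}\}_i}{(i!)^N}X^{i(N+1)}\pmod{p^2}. \]
   Context: $\mathbb{HD}^P_M(X)=\sum_{i=0}^{[P/M]}c_i(-M)^{P-iM}X^{iM}$ with $c_i=\binom{P}{i}\binom{P-i}{i}\cdots\binom{P-(M-1)i}{i}$ (the Hasse--Dwork polynomial, printed as $(-M)^P(1+M!\sum_{i\ge1}\binom{P}{M\times i}(X/(-M))^{iM})$ with $M!\binom{P}{M\times i}=c_i$). $\{a\}_i=a(a+1)\cdots(a+i-1)$ for $i\ge1$ and $\{a\}_0=1$; $H_k=1+\frac12+\cdots+\frac1k$. For $i(N+1)\ge p$ one writes $pH_{i(N+1)}=1+p(H_{i(N+1)}-\frac1p)$, so all coefficients lie in $\mathbb{Z}_{(p)}$. *)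

theory Defs
  imports "HOL-Computational_Algebra.Polynomial" "HOL-Computational_Algebra.Primes"
begin

definition in_Zloc :: "nat \<Rightarrow> rat \<Rightarrow> bool" where
  "in_Zloc p q \<longleftrightarrow> \<not> (int p dvd snd (quotient_of q))"

definition poly_cong_mod_p2 :: "nat \<Rightarrow> rat poly \<Rightarrow> rat poly \<Rightarrow> bool" where
  "poly_cong_mod_p2 p A B \<longleftrightarrow>
     (\<forall>k. in_Zloc p ((coeff A k - coeff B k) / (of_nat p)^2))"

definition HD_coeff :: "nat \<Rightarrow> nat \<Rightarrow> nat \<Rightarrow> nat" where
  "HD_coeff P M i = (\<Prod>k<M. (P - k * i) choose i)"

definition HD :: "nat \<Rightarrow> nat \<Rightarrow> rat poly" where
  "HD P M = (\<Sum>i = 0..P div M.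
      monom (of_nat (HD_coeff P M i) * (- of_nat M) ^ (P - i * M)) (i * M))"

definition Hnum :: "nat \<Rightarrow> rat" where
  "Hnum k = (\<Sum>j = 1..k. 1 / of_nat j)"

end

theory Submission
  imports Defs
begin

text \<open>Write P = mp - 1, M = N + 1, k = iM and Q = k!/(i!)^M. The coefficient of X^k in the
  Hasse--Dwork polynomial is binom(P, k) Q (-M)^(P-k), and Gauss' multiplication formula for rising
  factorials turns the coefficient on the right into (-1)^k (1 - mp H_k) Q (-M)^(P-k). So it suffices
  that Q (binom(P, k) - (-1)^k (1 - mp H_k)) vanishes modulo p^2. For k < p this holds because
  binom(mp - 1, k) = (-1)^k prod_{j=1..k} (1 - mp/j) and every mp/j is divisible by p. Otherwise
  m = 2 and p \<le> k < 2p; then the bracket vanishes only modulo p (by the symmetry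
  binom(2p - 1, k) = binom(2p - 1, 2p - 1 - k)), but i < p \<le> k makes p divide Q.\<close>

lemma pochhammer_mult_eq_prod:
  fixes z :: "'a::field_char_0"
  assumes "M > 0"
  shows "pochhammer z (i * M) =
    of_nat M ^ (i * M) * (\<Prod>j<M. pochhammer ((z + of_nat j) / of_nat M) i)"
proof (induction i)
  case (Suc i)
  have M: "(of_nat M :: 'a) \<noteq> 0" using assms by simp
  have "pochhammer (z + of_nat (i * M)) M = (\<Prod>j<M. of_nat M * ((z + of_nat j) / of_nat M + of_nat i))"
    unfolding pochhammer_prod atLeast0LessThan using M by (intro prod.cong) (simp_all add: field_simps)
  also have "\<dots> = of_nat M ^ M * (\<Prod>j<M. (z + of_nat j) / of_nat M + of_nat i)"
    by (simp add: prod.distrib)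
  finally have "pochhammer z (Suc i * M) =
      (of_nat M ^ (i * M) * (\<Prod>j<M. pochhammer ((z + of_nat j) / of_nat M) i)) *
      (of_nat M ^ M * (\<Prod>j<M. (z + of_nat j) / of_nat M + of_nat i))"
    using Suc.IH pochhammer_product'[of z "i * M" M] by (simp add: add.commute)
  then show ?case
    by (simp add: pochhammer_Suc prod.distrib power_add mult_ac)
qed simp

lemma fact_mult_eq_pochhammer_prod:
  "(fact (i * (N + 1)) :: 'a::field_char_0) =
    of_nat (N + 1) ^ (i * (N + 1)) * fact i * (\<Prod>j = 1..N. pochhammer (of_nat j / of_nat (N + 1)) i)"
proof -
  define M where "M = N + 1"
  have M: "M > 0" "{1..M} = insert M {1..N}"
    by (auto simp: M_def)
  then have "(of_nat M :: 'a) \<noteq> 0" by simp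
  have "(\<Prod>j<M. pochhammer ((1 + of_nat j) / of_nat M) i) =
      (\<Prod>j = 1..M. pochhammer (of_nat j / of_nat M :: 'a) i)"
    by (simp add: prod.atLeast1_atMost_eq add.commute)
  also have "\<dots> = fact i * (\<Prod>j = 1..N. pochhammer (of_nat j / of_nat M) i)"
    using M \<open>(of_nat M :: 'a) \<noteq> 0\<close> by (simp add: M_def pochhammer_fact del: of_nat_add)
  finally show ?thesis
    using pochhammer_mult_eq_prod[OF M(1), of 1 i] unfolding M_def[symmetric] pochhammer_fact
    by (metis mult.assoc)
qed

lemma HD_coeff_mult_fact:
  "i * M \<le> P \<Longrightarrow> HD_coeff P M i * fact (P - i * M) * fact i ^ M = fact P"
proof (induction M)
  case (Suc M)
  have "i \<le> P - i * M" using Suc.prems by simp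
  then have "fact i * fact (P - i * Suc M) * (P - i * M choose i) = fact (P - i * M)"
    using binomial_fact_lemma[of i "P - i * M"] by (simp add: diff_diff_add add.commute)
  then have "HD_coeff P (Suc M) i * fact (P - i * Suc M) * fact i ^ Suc M =
      HD_coeff P M i * fact (P - i * M) * fact i ^ M"
    by (simp add: HD_coeff_def mult.commute mult.left_commute)
  also have "\<dots> = fact P" using Suc by simp
  finally show ?case .
qed (simp add: HD_coeff_def)

lemma gbinomial_pred_eq_prod:
  fixes a :: "'a::field_char_0"
  shows "(a - 1) gchoose k = (-1) ^ k * (\<Prod>j = 1..k. 1 - a / of_nat j)"
proof (induction k)
  case (Suc k)
  have "of_nat (Suc k) * ((a - 1) gchoose Suc k) = (a - 1 - of_nat k) * ((a - 1) gchoose k)"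
    using gbinomial_mult_1[of "a - 1" k] by (simp add: algebra_simps)
  then have "(a - 1) gchoose Suc k = - (1 - a / of_nat (Suc k)) * ((a - 1) gchoose k)"
    by (simp add: field_simps del: of_nat_Suc) (simp add: algebra_simps)
  then show ?case
    using Suc.IH by (simp add: algebra_simps)
qed simp

lemma HD_coeff_eq_binomial_mult:
  assumes "i * M \<le> P"
  shows "HD_coeff P M i = (P choose (i * M)) * HD_coeff (i * M) M i"
proof -
  have "(P choose (i * M)) * HD_coeff (i * M) M i * (fact (P - i * M) * fact i ^ M) =
      (P choose (i * M)) * fact (P - i * M) * (HD_coeff (i * M) M i * fact i ^ M)"
    by (simp only: mult_ac)
  also have "\<dots> = fact P"
    using HD_coeff_mult_fact[of i M "i * M"] binomial_fact_lemma[OF assms] by (simp add: mult_ac)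
  also have "\<dots> = HD_coeff P M i * (fact (P - i * M) * fact i ^ M)"
    using HD_coeff_mult_fact[OF assms] by (simp add: mult_ac)
  finally show ?thesis by simp
qed

lemma prime_dvd_HD_coeff:
  assumes "prime p" "i < p" "p \<le> i * M"
  shows "p dvd HD_coeff (i * M) M i"
proof -
  have "p dvd HD_coeff (i * M) M i * fact i ^ M"
    using HD_coeff_mult_fact[of i M "i * M"] prime_dvd_fact_iff[OF assms(1)] assms(3) by simp
  moreover have "\<not> p dvd fact i ^ M"
    using assms prime_dvd_power[of p "fact i" M] by (auto simp: prime_dvd_fact_iff)
  ultimately show ?thesis
    using assms(1) prime_dvd_mult_iff by blast
qed

lemma pochhammer_prod_div_fact_power:
  "(\<Prod>j = 1..N. pochhammer (of_nat j / of_nat (N + 1)) i) / fact i ^ N =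
    (of_nat (HD_coeff (i * (N + 1)) (N + 1) i) / of_nat (N + 1) ^ (i * (N + 1)) :: 'a::field_char_0)"
proof -
  define M where "M = N + 1"
  define \<Pi> where "\<Pi> = (\<Prod>j = 1..N. pochhammer (of_nat j / of_nat M) i :: 'a)"
  have "HD_coeff (i * M) M i * fact i ^ M = fact (i * M)"
    using HD_coeff_mult_fact[of i M "i * M"] by simp
  then have "of_nat (HD_coeff (i * M) M i) * fact i ^ M = (fact (i * M) :: 'a)"
    by (metis of_nat_fact of_nat_mult of_nat_power)
  also have "\<dots> = of_nat M ^ (i * M) * fact i * \<Pi>"
    unfolding \<Pi>_def M_def by (rule fact_mult_eq_pochhammer_prod)
  finally have "fact i * (of_nat (HD_coeff (i * M) M i) * fact i ^ N) = fact i * (of_nat M ^ (i * M) * \<Pi>)"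
    by (simp add: M_def mult_ac)
  then have "of_nat (HD_coeff (i * M) M i) * fact i ^ N = of_nat M ^ (i * M) * \<Pi>"
    by simp
  moreover have "M \<noteq> 0" by (simp add: M_def)
  then have "(of_nat M :: 'a) \<noteq> 0" by simp
  ultimately have "\<Pi> / fact i ^ N = of_nat (HD_coeff (i * M) M i) / of_nat M ^ (i * M)"
    by (simp add: field_simps)
  then show ?thesis by (simp add: M_def \<Pi>_def)
qed

lemma HD_coeff_diff_factor:
  fixes c :: rat
  assumes "i * (N + 1) \<le> P"
  shows "of_nat (HD_coeff P (N + 1) i) * (- of_nat (N + 1)) ^ (P - i * (N + 1)) -
      (- of_nat (N + 1)) ^ P * (c * (\<Prod>j = 1..N. pochhammer (of_nat j / of_nat (N + 1)) i) / fact i ^ N) =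
    (- of_nat (N + 1)) ^ (P - i * (N + 1)) * of_nat (HD_coeff (i * (N + 1)) (N + 1) i) *
      (of_nat (P choose (i * (N + 1))) - (-1) ^ (i * (N + 1)) * c)"
proof -
  define k where "k = i * (N + 1)"
  define a where "a = (of_nat (N + 1) :: rat)"
  define Q where "Q = (of_nat (HD_coeff k (N + 1) i) :: rat)"
  have "a \<noteq> 0" by (simp add: a_def)
  have "(- a) ^ P = (- a) ^ (P - k) * (- a) ^ k"
    using assms by (simp add: k_def flip: power_add)
  also have "\<dots> = (- a) ^ (P - k) * (-1) ^ k * a ^ k"
    by (simp add: power_minus[of a k])
  finally have "(- a) ^ P * (c * (Q / a ^ k)) = (- a) ^ (P - k) * (-1) ^ k * c * Q"
    using \<open>a \<noteq> 0\<close> by simp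
  moreover have "c * (\<Prod>j = 1..N. pochhammer (of_nat j / a) i) / fact i ^ N = c * (Q / a ^ k)"
    unfolding times_divide_eq_right[symmetric] a_def Q_def k_def
    by (subst pochhammer_prod_div_fact_power) (rule refl)
  moreover have "(of_nat (HD_coeff P (N + 1) i) :: rat) = of_nat (P choose k) * Q"
    using HD_coeff_eq_binomial_mult[OF assms] by (simp add: k_def Q_def)
  ultimately show ?thesis
    unfolding k_def[symmetric] a_def[symmetric] Q_def[symmetric]
    by (simp add: algebra_simps)
qed

lemma in_Zloc_iff:
  "in_Zloc p q \<longleftrightarrow> (\<exists>a b. b \<noteq> 0 \<and> \<not> int p dvd b \<and> q = of_int a / of_int b)"
proof
  assume "in_Zloc p q"
  obtain a b where ab: "quotient_of q = (a, b)" by fastforce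
  then show "\<exists>a b. b \<noteq> 0 \<and> \<not> int p dvd b \<and> q = of_int a / of_int b"
    using \<open>in_Zloc p q\<close> quotient_of_div[OF ab] quotient_of_denom_pos[OF ab]
    unfolding in_Zloc_def by (intro exI[of _ a] exI[of _ b]) auto
next
  assume "\<exists>a b. b \<noteq> 0 \<and> \<not> int p dvd b \<and> q = of_int a / of_int b"
  then obtain a b where b: "b \<noteq> 0" "\<not> int p dvd b" and q: "q = of_int a / of_int b"
    by blast
  obtain n d where nd: "quotient_of q = (n, d)" by fastforce
  have "of_int n / of_int d = (of_int a / of_int b :: rat)"
    using quotient_of_div[OF nd] q by simp
  then have "n * b = a * d"
    using quotient_of_denom_pos[OF nd] b(1) by (simp add: field_simps flip: of_int_mult)
  then have "d dvd n * b" by simp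
  then have "d dvd b"
    using quotient_of_coprime[OF nd] coprime_dvd_mult_right_iff[of d n b]
    by (simp add: coprime_commute)
  then show "in_Zloc p q"
    using b(2) nd dvd_trans unfolding in_Zloc_def by auto
qed

context
  fixes p :: nat
  assumes p: "prime p"
begin

lemma in_Zloc_of_int [simp]: "in_Zloc p (of_int a)"
  using p unfolding in_Zloc_iff by (intro exI[of _ a] exI[of _ 1]) (auto simp: prime_gt_1_nat)

lemma in_Zloc_of_nat [simp]: "in_Zloc p (of_nat n)"
  using in_Zloc_of_int[of "int n"] by simp

lemma in_Zloc_numeral [simp]: "in_Zloc p (numeral n)"
  using in_Zloc_of_nat[of "numeral n"] by simp

lemma in_Zloc_minus_one_power [simp]: "in_Zloc p ((-1) ^ n)"
  using in_Zloc_of_int[of "(-1) ^ n"] by simp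

lemma in_Zloc_0 [simp]: "in_Zloc p 0" and in_Zloc_1 [simp]: "in_Zloc p 1"
  using in_Zloc_of_int[of 0] in_Zloc_of_int[of 1] by simp_all

lemma in_Zloc_uminus: "in_Zloc p x \<Longrightarrow> in_Zloc p (- x)"
  unfolding in_Zloc_iff by (metis minus_divide_left of_int_minus)

lemma in_Zloc_inverse_of_nat:
  assumes "\<not> p dvd n"
  shows "in_Zloc p (1 / of_nat n)"
  using assms unfolding in_Zloc_iff
  by (intro exI[of _ 1] exI[of _ "int n"]) (auto intro: Nat.gr0I)

lemma in_Zloc_add_mult:
  assumes "in_Zloc p x" "in_Zloc p y"
  shows in_Zloc_add: "in_Zloc p (x + y)" and in_Zloc_mult: "in_Zloc p (x * y)"
proof -
  obtain a b where b: "b \<noteq> 0" "\<not> int p dvd b" and x: "x = of_int a / of_int b"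
    using assms(1) unfolding in_Zloc_iff by blast
  obtain c d where d: "d \<noteq> 0" "\<not> int p dvd d" and y: "y = of_int c / of_int d"
    using assms(2) unfolding in_Zloc_iff by blast
  have bd: "b * d \<noteq> 0" "\<not> int p dvd b * d"
    using b d p by (simp_all add: prime_dvd_mult_iff)
  have "x + y = of_int (a * d + c * b) / of_int (b * d)" "x * y = of_int (a * c) / of_int (b * d)"
    using b d unfolding x y by (simp_all add: field_simps)
  then show "in_Zloc p (x + y)" "in_Zloc p (x * y)"
    using bd unfolding in_Zloc_iff by blast+
qed

lemma in_Zloc_diff: "in_Zloc p x \<Longrightarrow> in_Zloc p y \<Longrightarrow> in_Zloc p (x - y)"
  using in_Zloc_add[of x "- y"] in_Zloc_uminus[of y] by simp

lemma in_Zloc_power: "in_Zloc p x \<Longrightarrow> in_Zloc p (x ^ n)"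
  by (induction n) (auto intro: in_Zloc_mult)

lemma in_Zloc_sum: "(\<And>i. i \<in> A \<Longrightarrow> in_Zloc p (f i)) \<Longrightarrow> in_Zloc p (\<Sum>i\<in>A. f i)"
  by (induction A rule: infinite_finite_induct) (auto intro: in_Zloc_add)

lemma in_Zloc_div_prime_power_mono:
  assumes "in_Zloc p (x / of_nat p ^ n)" "e \<le> n"
  shows "in_Zloc p (x / of_nat p ^ e)"
proof -
  have "x / of_nat p ^ e = of_nat p ^ (n - e) * (x / of_nat p ^ n)"
    using p assms(2) by (simp add: prime_gt_0_nat field_simps flip: power_add)
  also have "in_Zloc p \<dots>"
    using assms(1) by (intro in_Zloc_mult in_Zloc_power) simp_all
  finally show ?thesis .
qed

lemma in_Zloc_sum_inverse:
  assumes "\<And>j. j \<in> A \<Longrightarrow> \<not> p dvd j"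
  shows "in_Zloc p (\<Sum>j\<in>A. 1 / of_nat j)"
  using assms by (intro in_Zloc_sum in_Zloc_inverse_of_nat)

lemma in_Zloc_Hnum: "k < p \<Longrightarrow> in_Zloc p (Hnum k)"
  unfolding Hnum_def by (intro in_Zloc_sum_inverse) (auto dest: dvd_imp_le)

lemma in_Zloc_Hnum_minus_inverse:
  assumes "p \<le> k" "k < 2 * p"
  shows "in_Zloc p (Hnum k - 1 / of_nat p)"
proof -
  have "\<not> p dvd j" if "j \<in> {1..k} - {p}" for j
  proof
    assume "p dvd j"
    then obtain c where j: "j = p * c" by blast
    have "j \<le> k" using that by simp
    then have "p * c < p * 2" using assms j by linarith
    then have "c < 2" by simp
    with j that show False
      using less_2_cases by fastforce
  qed
  moreover have "Hnum k = 1 / of_nat p + (\<Sum>j\<in>{1..k} - {p}. 1 / of_nat j)"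
    unfolding Hnum_def using assms p by (subst sum.remove[of _ p]) (auto simp: prime_gt_0_nat)
  ultimately show ?thesis
    using in_Zloc_sum_inverse[of "{1..k} - {p}"] by simp
qed

lemma in_Zloc_prod_one_minus:
  assumes "finite A" "\<And>j. j \<in> A \<Longrightarrow> in_Zloc p (x j / of_nat p)"
  shows "in_Zloc p (((\<Prod>j\<in>A. 1 - x j) - (1 - (\<Sum>j\<in>A. x j))) / of_nat p ^ 2)"
  using assms
proof (induction A rule: finite_induct)
  case (insert a A)
  define E where "E = (\<Prod>j\<in>A. 1 - x j) - (1 - (\<Sum>j\<in>A. x j))"
  have "in_Zloc p (x a)"
    using in_Zloc_div_prime_power_mono[of "x a" 1 0] insert.prems by simp
  moreover have "in_Zloc p ((\<Sum>j\<in>A. x j) / of_nat p)"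
    unfolding sum_divide_distrib using insert.prems by (intro in_Zloc_sum) auto
  moreover have "in_Zloc p (E / of_nat p ^ 2)"
    using insert by (simp add: E_def)
  moreover have "((\<Prod>j\<in>insert a A. 1 - x j) - (1 - (\<Sum>j\<in>insert a A. x j))) / of_nat p ^ 2 =
      (1 - x a) * (E / of_nat p ^ 2) + (x a / of_nat p) * ((\<Sum>j\<in>A. x j) / of_nat p)"
    using insert.hyps p by (simp add: E_def field_simps power2_eq_square prime_gt_0_nat)
  ultimately show ?case
    using insert.prems by (simp only:) (intro in_Zloc_add in_Zloc_mult in_Zloc_diff in_Zloc_1; simp)
qed simp

lemma binomial_pred_mult_prime_cong:
  assumes "k < p" "m > 0"
  shows "in_Zloc p ((of_nat (m * p - 1 choose k) - (-1) ^ k * (1 - of_nat (m * p) * Hnum k))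
    / of_nat p ^ 2)"
proof -
  define x where "x j = of_nat (m * p) / (of_nat j :: rat)" for j
  have "of_nat (m * p - 1 choose k) = (of_nat (m * p) - 1 :: rat) gchoose k"
    using assms p by (simp add: binomial_gbinomial prime_gt_0_nat)
  also have "\<dots> = (-1) ^ k * (\<Prod>j = 1..k. 1 - x j)"
    unfolding x_def by (rule gbinomial_pred_eq_prod)
  finally have "(of_nat (m * p - 1 choose k) - (-1) ^ k * (1 - of_nat (m * p) * Hnum k)) / of_nat p ^ 2
      = (-1) ^ k * (((\<Prod>j = 1..k. 1 - x j) - (1 - (\<Sum>j = 1..k. x j))) / of_nat p ^ 2)"
    by (simp add: Hnum_def x_def sum_distrib_left algebra_simps)
  moreover have "in_Zloc p (x j / of_nat p)" if "j \<in> {1..k}" for j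
  proof -
    have "x j / of_nat p = of_nat m * (1 / of_nat j)"
      using p by (simp add: x_def prime_gt_0_nat)
    moreover have "\<not> p dvd j" using that assms by (auto dest: dvd_imp_le)
    ultimately show ?thesis
      by (simp only:) (intro in_Zloc_mult in_Zloc_of_nat in_Zloc_inverse_of_nat)
  qed
  then have "in_Zloc p (((\<Prod>j = 1..k. 1 - x j) - (1 - (\<Sum>j = 1..k. x j))) / of_nat p ^ 2)"
    by (intro in_Zloc_prod_one_minus) simp_all
  ultimately show ?thesis
    by (simp only:) (intro in_Zloc_mult; simp)
qed

lemma binomial_two_prime_pred_cong:
  assumes "p \<le> k" "k < 2 * p"
  shows "in_Zloc p ((of_nat (2 * p - 1 choose k) - (-1) ^ k * (1 - of_nat (2 * p) * Hnum k))
    / of_nat p)"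
proof -
  define k' where "k' = 2 * p - 1 - k"
  define E where "E = of_nat (2 * p - 1 choose k') - (-1) ^ k' * (1 - of_nat (2 * p) * Hnum k')"
  have k': "k' < p" "k + k' = 2 * p - 1" using assms by (auto simp: k'_def)
  have "in_Zloc p (E / of_nat p)"
    using in_Zloc_div_prime_power_mono[of E 2 1] binomial_pred_mult_prime_cong[OF k'(1), of 2]
    unfolding E_def by simp
  moreover have "(-1) ^ k' = - ((-1) ^ k :: rat)"
  proof -
    have "odd (k + k')" using k'(2) p by (simp add: prime_gt_0_nat)
    then show ?thesis by (auto simp: minus_one_power_iff)
  qed
  moreover have "2 * p - 1 choose k = 2 * p - 1 choose k'"
    using binomial_symmetric[of k "2 * p - 1"] assms by (simp add: k'_def)
  ultimately have "(of_nat (2 * p - 1 choose k) - (-1) ^ k * (1 - of_nat (2 * p) * Hnum k)) / of_nat p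
      = E / of_nat p + (-1) ^ k * 2 * (Hnum k - 1 / of_nat p) + (-1) ^ k * 2 * Hnum k'"
    using p by (simp add: E_def field_simps prime_gt_0_nat)
  moreover have "in_Zloc p (Hnum k - 1 / of_nat p)" "in_Zloc p (Hnum k')"
    using in_Zloc_Hnum_minus_inverse[OF assms] in_Zloc_Hnum[OF k'(1)] .
  ultimately show ?thesis
    using \<open>in_Zloc p (E / of_nat p)\<close> by (simp only:) (intro in_Zloc_add in_Zloc_mult; simp)
qed

end

lemma coeff_sum_monom_mult:
  assumes "finite A" "M > 0"
  shows "coeff (\<Sum>i\<in>A. monom (f i) (i * M)) n =
    (if M dvd n \<and> n div M \<in> A then f (n div M) else 0)"
proof (cases "M dvd n")
  case True
  then have "i * M = n \<longleftrightarrow> i = n div M" for i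
    using assms(2) by auto
  then show ?thesis
    using True assms(1) by (simp add: coeff_sum)
next
  case False
  then have "i * M \<noteq> n" for i by auto
  then show ?thesis
    using False by (simp add: coeff_sum)
qed

lemma HD_coeff_cong:
  fixes p N m i :: nat
  assumes p: "prime p" and "N > 0" and m: "m \<in> {1, 2}" and i: "i * (N + 1) \<le> m * p - 1"
  shows "in_Zloc p ((of_nat (HD_coeff (m * p - 1) (N + 1) i) * (- of_nat (N + 1)) ^ (m * p - 1 - i * (N + 1))
    - (- of_nat (N + 1)) ^ (m * p - 1) * ((1 - of_nat (m * p) * Hnum (i * (N + 1))) *
        (\<Prod>j = 1..N. pochhammer (of_nat j / of_nat (N + 1)) i) / fact i ^ N)) / of_nat p ^ 2)"
proof -
  define k where "k = i * (N + 1)"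
  define Q where "Q = HD_coeff k (N + 1) i"
  define D where "D = of_nat (m * p - 1 choose k) - (-1) ^ k * (1 - of_nat (m * p) * Hnum k)"
  have "in_Zloc p (of_nat Q * (D / of_nat p ^ 2))"
  proof (cases "k < p")
    case True
    moreover have "m > 0" using m by auto
    ultimately have "in_Zloc p (D / of_nat p ^ 2)"
      unfolding D_def by (rule binomial_pred_mult_prime_cong[OF p])
    then show ?thesis using p by (intro in_Zloc_mult) simp_all
  next
    case False
    moreover have "k \<le> m * p - 1" "p > 0"
      using i p by (simp_all add: k_def prime_gt_0_nat)
    ultimately have "m = 2" "p \<le> k" "k < 2 * p"
      using m by auto
    moreover have "i * 2 \<le> k"
      unfolding k_def using \<open>N > 0\<close> by (intro mult_le_mono2) simp
    then have "i < p" using \<open>k < 2 * p\<close> by linarith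
    ultimately obtain Q' where "Q = p * Q'"
      using prime_dvd_HD_coeff[OF p, of i "N + 1"] by (auto simp: Q_def k_def)
    then have "of_nat Q * (D / of_nat p ^ 2) = of_nat Q' * (D / of_nat p)"
      using \<open>p > 0\<close> by (simp add: power2_eq_square)
    moreover have "in_Zloc p (D / of_nat p)"
      using binomial_two_prime_pred_cong[OF p \<open>p \<le> k\<close> \<open>k < 2 * p\<close>] by (simp add: D_def \<open>m = 2\<close>)
    ultimately show ?thesis using p by (simp only:) (intro in_Zloc_mult; simp)
  qed
  then have "in_Zloc p ((- of_nat (N + 1)) ^ (m * p - 1 - k) * (of_nat Q * (D / of_nat p ^ 2)))"
    by (rule in_Zloc_mult[OF p in_Zloc_power[OF p in_Zloc_uminus[OF p in_Zloc_of_nat[OF p]]]])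
  also have "(- of_nat (N + 1)) ^ (m * p - 1 - k) * (of_nat Q * (D / of_nat p ^ 2)) =
      (- of_nat (N + 1)) ^ (m * p - 1 - k) * of_nat Q * D / of_nat p ^ 2"
    by simp
  also have "(- of_nat (N + 1)) ^ (m * p - 1 - k) * of_nat Q * D =
      of_nat (HD_coeff (m * p - 1) (N + 1) i) * (- of_nat (N + 1)) ^ (m * p - 1 - k)
      - (- of_nat (N + 1)) ^ (m * p - 1) * ((1 - of_nat (m * p) * Hnum k) *
        (\<Prod>j = 1..N. pochhammer (of_nat j / of_nat (N + 1)) i) / fact i ^ N)"
    unfolding k_def Q_def D_def by (rule HD_coeff_diff_factor[OF i, symmetric])
  finally show ?thesis
    unfolding k_def .
qed

lemma poly_cong_mod_p2_sum_monom:
  assumes "prime p" "finite A" "M > 0"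
    and "\<And>i. i \<in> A \<Longrightarrow> in_Zloc p ((f i - c * g i) / of_nat p ^ 2)"
  shows "poly_cong_mod_p2 p (\<Sum>i\<in>A. monom (f i) (i * M)) (smult c (\<Sum>i\<in>A. monom (g i) (i * M)))"
  unfolding poly_cong_mod_p2_def coeff_smult coeff_sum_monom_mult[OF assms(2,3)]
  using assms(1,4) by simp

theorem proposition3p10:
  fixes p N m :: nat
  assumes "prime p" and "p > 2" and "N \<ge> 2" and "\<not> p dvd (N + 1)"
    and "m \<in> {1, 2}"
  shows "poly_cong_mod_p2 p (HD (m * p - 1) (N + 1))
           (smult ((- of_nat (N + 1)) ^ (m * p - 1))
             (\<Sum>i = 0..(m * p - 1) div (N + 1).
                monom ((1 - of_nat (m * p) * Hnum (i * (N + 1))) *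
                       (\<Prod>j = 1..N. pochhammer (of_nat j / of_nat (N + 1)) i) /
                       (fact i) ^ N) (i * (N + 1))))"
  unfolding HD_def
  using assms(1,3,5)
  by (intro poly_cong_mod_p2_sum_monom HD_coeff_cong) (auto simp: less_eq_div_iff_mult_less_eq)

end
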